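(* Let $k$ be a field, $d\in\mathbb{N}$, $X=Q_d\times\mathcal{L}\mathbb{G}_m$ and $Y=\mathcal{L}^{\le d}\mathbb{A}^1$, and let $\beta_d:X\to Y$ be $\beta_d(q,u)=uq$. Then $\beta_d$ is surjective on $k$-points, and for every $x\in X(k)$ with image $y=\beta_d(x)\in Y(k)$ the induced morphism of formal completions $\hat X_x\to\hat Y_y$ is formally smooth.
   Context: $\mathcal{L}\mathbb{A}^1=\operatorname{Spec}k[x_0,x_1,\ldots]$ is the arc space of the affine line, whose $R$-points are formal series $x_0+x_1t+\cdots\in R[[t]]$. $\mathcal{L}^{\le d}\mathbb{A}^1$ is the open subscheme of $\mathcal{L}\mathbb{A}^1$ which is the preimage of the complement of $0$ under the projection to $\operatorname{Spec}k[x_0,\ldots,x_d]$; its $k$-points are the series of $t$-adic valuation $\le d$. $Q_d$ is the closed affine subspace of $\mathcal{L}\mathbb{A}^1$ defined by $x_d=1$, $x_{d+1}=x_{d+2}=\cdots=0$, i.e. monic polynomials of degree $d$. $\mathcal{L}\mathbb{G}_m$ represents $R\mapsto R[[t]]^\times$. Formal smoothness of $\hat X_x\to\hat Y_y$ means the infinitesimal lifting property with respect to surjections of Artinian local $k$-algebras. *)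

theory Defs
  imports "HOL-Computational_Algebra.Formal_Power_Series"
begin

definition is_ideal :: "'a::comm_ring_1 set \<Rightarrow> bool" where
  "is_ideal I \<longleftrightarrow> 0 \<in> I \<and> (\<forall>x\<in>I. \<forall>y\<in>I. x + y \<in> I) \<and> (\<forall>a. \<forall>x\<in>I. a * x \<in> I)"

definition is_max_ideal :: "'a::comm_ring_1 set \<Rightarrow> bool" where
  "is_max_ideal m \<longleftrightarrow> is_ideal m \<and> m \<noteq> UNIV \<and>
     (\<forall>J. is_ideal J \<and> m \<subseteq> J \<longrightarrow> J = m \<or> J = UNIV)"

definition is_local_ring :: "'a::comm_ring_1 itself \<Rightarrow> bool" where
  "is_local_ring _ \<longleftrightarrow> (\<exists>!m::'a set. is_max_ideal m)"

definition max_ideal :: "'a::comm_ring_1 set" where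
  "max_ideal = (THE m. is_max_ideal m)"

definition is_artinian :: "'a::comm_ring_1 itself \<Rightarrow> bool" where
  "is_artinian _ \<longleftrightarrow> (\<forall>I :: nat \<Rightarrow> 'a set.
      (\<forall>n. is_ideal (I n) \<and> I (Suc n) \<subseteq> I n) \<longrightarrow> (\<exists>N. \<forall>n\<ge>N. I n = I N))"

text \<open>A k-algebra structure on A is a unital ring homomorphism k -> A.\<close>
definition ring_hom_fun :: "('a::comm_ring_1 \<Rightarrow> 'b::comm_ring_1) \<Rightarrow> bool" where
  "ring_hom_fun f \<longleftrightarrow> f 1 = 1 \<and> (\<forall>x y. f (x + y) = f x + f y) \<and> (\<forall>x y. f (x * y) = f x * f y)"

text \<open>Artinian local k-algebra with residue field k (objects of Art_k).\<close>
definition art_local_k_alg :: "('k::field \<Rightarrow> 'a::comm_ring_1) \<Rightarrow> bool" where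
  "art_local_k_alg \<phi> \<longleftrightarrow> ring_hom_fun \<phi> \<and> is_local_ring TYPE('a) \<and> is_artinian TYPE('a) \<and>
     (\<forall>a::'a. \<exists>c. a - \<phi> c \<in> max_ideal)"

definition k_alg_hom :: "('k::field \<Rightarrow> 'a::comm_ring_1) \<Rightarrow> ('k \<Rightarrow> 'b::comm_ring_1) \<Rightarrow> ('a \<Rightarrow> 'b) \<Rightarrow> bool" where
  "k_alg_hom \<phi>A \<phi>B \<pi> \<longleftrightarrow> ring_hom_fun \<pi> \<and> (\<forall>c. \<pi> (\<phi>A c) = \<phi>B c)"

definition fps_map :: "('a \<Rightarrow> 'b) \<Rightarrow> 'a fps \<Rightarrow> 'b fps" where
  "fps_map h f = Abs_fps (\<lambda>n. h (fps_nth f n))"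

definition Qd_pt :: "nat \<Rightarrow> 'a::comm_ring_1 fps \<Rightarrow> bool" where
  "Qd_pt d q \<longleftrightarrow> fps_nth q d = 1 \<and> (\<forall>n>d. fps_nth q n = 0)"

definition LGm_pt :: "'a::comm_ring_1 fps \<Rightarrow> bool" where
  "LGm_pt u \<longleftrightarrow> (\<exists>v. u * v = 1)"

definition X_pt :: "nat \<Rightarrow> 'a::comm_ring_1 fps \<times> 'a fps \<Rightarrow> bool" where
  "X_pt d x \<longleftrightarrow> Qd_pt d (fst x) \<and> LGm_pt (snd x)"

text \<open>R-points of L^{<=d} A^1: series whose coefficients x_0..x_d generate the unit ideal
  (i.e. Spec R -> A^{d+1} lands in the complement of the origin).\<close>
definition Y_pt :: "nat \<Rightarrow> 'a::comm_ring_1 fps \<Rightarrow> bool" where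
  "Y_pt d f \<longleftrightarrow> (\<exists>c. (\<Sum>i\<le>d. c i * fps_nth f i) = 1)"

definition beta :: "'a::comm_ring_1 fps \<times> 'a fps \<Rightarrow> 'a fps" where
  "beta x = snd x * fst x"

definition reduces_to :: "('k::field \<Rightarrow> 'a::comm_ring_1) \<Rightarrow> 'a fps \<Rightarrow> 'k fps \<Rightarrow> bool" where
  "reduces_to \<phi> f g \<longleftrightarrow> (\<forall>n. fps_nth f n - \<phi> (fps_nth g n) \<in> max_ideal)"

definition hatX_pt :: "('k::field \<Rightarrow> 'a::comm_ring_1) \<Rightarrow> nat \<Rightarrow> 'k fps \<times> 'k fps \<Rightarrow> 'a fps \<times> 'a fps \<Rightarrow> bool" where
  "hatX_pt \<phi> d x \<xi> \<longleftrightarrow> X_pt d \<xi> \<and> reduces_to \<phi> (fst \<xi>) (fst x) \<and> reduces_to \<phi> (snd \<xi>) (snd x)"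

definition hatY_pt :: "('k::field \<Rightarrow> 'a::comm_ring_1) \<Rightarrow> nat \<Rightarrow> 'k fps \<Rightarrow> 'a fps \<Rightarrow> bool" where
  "hatY_pt \<phi> d y \<eta> \<longleftrightarrow> Y_pt d \<eta> \<and> reduces_to \<phi> \<eta> y"

text \<open>Infinitesimal lifting property of hat X_x -> hat Y_y with respect to a surjection
  pi : A -> B in Art_k.\<close>
definition beta_lifts :: "nat \<Rightarrow> 'k::field fps \<times> 'k fps \<Rightarrow> ('k \<Rightarrow> 'a::comm_ring_1) \<Rightarrow> ('k \<Rightarrow> 'b::comm_ring_1) \<Rightarrow> ('a \<Rightarrow> 'b) \<Rightarrow> bool" where
  "beta_lifts d x \<phi>A \<phi>B \<pi> \<longleftrightarrow>
     (\<forall>\<xi>B \<eta>. hatX_pt \<phi>B d x \<xi>B \<and> hatY_pt \<phi>A d (beta x) \<eta> \<and> beta \<xi>B = fps_map \<pi> \<eta> \<longrightarrow>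
        (\<exists>\<xi>A. hatX_pt \<phi>A d x \<xi>A \<and> fps_map \<pi> (fst \<xi>A) = fst \<xi>B \<and> fps_map \<pi> (snd \<xi>A) = snd \<xi>B
               \<and> beta \<xi>A = \<eta>))"

end

(*
  Surjectivity: a series y of order v \<le> d over k factors as y = u q with q = X^v + X^d
  (just X^d if v = d) and u a unit.

  Formal smoothness: let \<eta> over A lift u q, and let (qB, uB) over B = A/ker \<pi> satisfy uB qB = \<pi> \<eta>.
  With v the order of u q, the coefficients \<eta>_i for i < v lie in the maximal ideal, hence are
  nilpotent, and \<eta>_v is a unit. So \<eta> is X^v times a unit up to nilpotent lower terms, and the
  equation "coefficients of \<delta> \<eta> in degrees \<ge> v are prescribed" has a solution \<delta> with coefficients
  in any given ideal, by a geometric series that terminates because a product of enough nilpotent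
  generators vanishes. Applied to J = ker \<pi>, this corrects a lift w0 of uB\<inverse> to w with w \<eta> monic
  of degree d; then (w \<eta>, w\<inverse>) is the required lift.
*)

theory Submission
  imports Defs
begin

unbundle fps_syntax

lemma is_ideal_0: "is_ideal I \<Longrightarrow> 0 \<in> I"
  unfolding is_ideal_def by blast

lemma is_ideal_add: "is_ideal I \<Longrightarrow> x \<in> I \<Longrightarrow> y \<in> I \<Longrightarrow> x + y \<in> I"
  unfolding is_ideal_def by blast

lemma is_ideal_mult: "is_ideal I \<Longrightarrow> x \<in> I \<Longrightarrow> a * x \<in> I"
  unfolding is_ideal_def by blast

lemma is_ideal_uminus: "is_ideal I \<Longrightarrow> x \<in> I \<Longrightarrow> - x \<in> I"
  using is_ideal_mult[of I x "- 1"] by simp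

lemma is_ideal_diff: "is_ideal I \<Longrightarrow> x \<in> I \<Longrightarrow> y \<in> I \<Longrightarrow> x - y \<in> I"
  using is_ideal_add[of I x "- y"] is_ideal_uminus by auto

lemma is_ideal_sum: "is_ideal I \<Longrightarrow> (\<And>i. i \<in> A \<Longrightarrow> x i \<in> I) \<Longrightarrow> sum x A \<in> I"
  by (induction A rule: infinite_finite_induct) (auto intro: is_ideal_0 is_ideal_add)

lemma is_ideal_eq_UNIV: "is_ideal I \<Longrightarrow> 1 \<in> I \<Longrightarrow> I = UNIV"
  using is_ideal_mult[of I 1] by auto

lemma is_ideal_principal: "is_ideal {c * a | c. True}"
  unfolding is_ideal_def
  by (auto intro: exI[of _ 0] exI[of _ "_ + _"] exI[of _ "_ * _"] simp: distrib_right mult.assoc)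

lemma is_ideal_Union_chain:
  assumes "C \<noteq> {}" "\<And>J. J \<in> C \<Longrightarrow> is_ideal J" "subset.chain UNIV C"
  shows "is_ideal (\<Union>C)"
  unfolding is_ideal_def
proof (intro conjI ballI allI)
  show "0 \<in> \<Union>C" using assms(1,2) is_ideal_0 by blast
  show "a * x \<in> \<Union>C" if "x \<in> \<Union>C" for a x
    using that assms(2) is_ideal_mult by blast
  fix x y assume "x \<in> \<Union>C" "y \<in> \<Union>C"
  then obtain X Y where "X \<in> C" "Y \<in> C" "x \<in> X" "y \<in> Y" by blast
  moreover have "X \<subseteq> Y \<or> Y \<subseteq> X"
    using assms(3) \<open>X \<in> C\<close> \<open>Y \<in> C\<close> unfolding subset.chain_def by blast
  ultimately show "x + y \<in> \<Union>C" using assms(2) is_ideal_add by (metis UnionI subsetD)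
qed

lemma proper_ideal_subset_max_ideal:
  fixes I :: "'a::comm_ring_1 set"
  assumes "is_ideal I" "1 \<notin> I"
  shows "\<exists>M. is_max_ideal M \<and> I \<subseteq> M"
proof -
  define \<A> where "\<A> = {J :: 'a set. is_ideal J \<and> I \<subseteq> J \<and> 1 \<notin> J}"
  have "\<exists>M\<in>\<A>. \<forall>X\<in>\<A>. M \<subseteq> X \<longrightarrow> X = M"
  proof (rule subset_Zorn_nonempty)
    show "\<A> \<noteq> {}" using assms unfolding \<A>_def by blast
    fix C assume C: "C \<noteq> {}" "subset.chain \<A> C"
    then have "is_ideal (\<Union>C)"
      by (intro is_ideal_Union_chain) (auto simp: \<A>_def subset.chain_def)
    with C show "\<Union>C \<in> \<A>" unfolding \<A>_def subset.chain_def by blast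
  qed
  then obtain M where M: "M \<in> \<A>" "\<And>X. X \<in> \<A> \<Longrightarrow> M \<subseteq> X \<Longrightarrow> X = M" by blast
  have "is_max_ideal M"
    unfolding is_max_ideal_def
  proof (intro conjI allI impI)
    show "is_ideal M" "M \<noteq> UNIV" using M(1) unfolding \<A>_def by auto
    fix J assume J: "is_ideal J \<and> M \<subseteq> J"
    show "J = M \<or> J = UNIV"
    proof (cases "1 \<in> J")
      case True
      then show ?thesis using J is_ideal_eq_UNIV by blast
    next
      case False
      then have "J \<in> \<A>" using J M(1) unfolding \<A>_def by blast
      then show ?thesis using M(2) J by blast
    qed
  qed
  then show ?thesis using M(1) unfolding \<A>_def by blast
qed

lemma is_max_ideal_max_ideal:
  assumes "is_local_ring TYPE('a::comm_ring_1)"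
  shows "is_max_ideal (max_ideal :: 'a set)"
  using assms unfolding is_local_ring_def max_ideal_def by (rule theI')

lemma is_ideal_max_ideal: "is_local_ring TYPE('a::comm_ring_1) \<Longrightarrow> is_ideal (max_ideal :: 'a set)"
  using is_max_ideal_max_ideal unfolding is_max_ideal_def by blast

lemma max_ideal_iff_not_unit:
  fixes a :: "'a::comm_ring_1"
  assumes local: "is_local_ring TYPE('a)"
  shows "a \<in> max_ideal \<longleftrightarrow> \<not> a dvd 1"
proof
  assume a: "a \<in> max_ideal"
  show "\<not> a dvd 1"
  proof
    assume "a dvd 1"
    then obtain b where "1 = a * b" by (elim dvdE)
    then have "1 \<in> (max_ideal :: 'a set)"
      using is_ideal_mult[OF is_ideal_max_ideal[OF local] a, of b] by (simp add: mult.commute)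
    then show False
      using is_ideal_eq_UNIV is_max_ideal_max_ideal[OF local] unfolding is_max_ideal_def by blast
  qed
next
  assume "\<not> a dvd 1"
  moreover have "c * a = 1 \<Longrightarrow> a dvd 1" for c by (metis dvd_triv_right)
  ultimately have "1 \<notin> {c * a | c. True}" by force
  then obtain M where M: "is_max_ideal M" "{c * a | c. True} \<subseteq> M"
    using proper_ideal_subset_max_ideal is_ideal_principal by blast
  have "M = max_ideal"
    using M(1) is_max_ideal_max_ideal[OF local] local unfolding is_local_ring_def by blast
  moreover have "a \<in> {c * a | c. True}" by (auto intro: exI[of _ 1])
  ultimately show "a \<in> max_ideal" using M(2) by blast
qed

lemma unit_if_diff_in_max_ideal:
  fixes a b :: "'a::comm_ring_1"
  assumes local: "is_local_ring TYPE('a)" and "a - b \<in> max_ideal" "b dvd 1"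
  shows "a dvd 1"
proof (rule ccontr)
  assume "\<not> a dvd 1"
  then have "a \<in> max_ideal" by (simp add: max_ideal_iff_not_unit[OF local])
  then have "a - (a - b) \<in> max_ideal"
    using assms(2) by (rule is_ideal_diff[OF is_ideal_max_ideal[OF local]])
  then show False using assms(3) by (simp add: max_ideal_iff_not_unit[OF local])
qed

lemma max_ideal_nilpotent:
  fixes a :: "'a::comm_ring_1"
  assumes local: "is_local_ring TYPE('a)" and "is_artinian TYPE('a)" and a: "a \<in> max_ideal"
  shows "\<exists>n. a ^ n = 0"
proof -
  define I where "I n = {c * a ^ n | c. True}" for n
  have "I (Suc n) \<subseteq> I n" for n
  proof
    fix x assume "x \<in> I (Suc n)"
    then obtain c where "x = c * a ^ Suc n" unfolding I_def by blast
    then have "x = (c * a) * a ^ n" by (simp add: mult.assoc)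
    then show "x \<in> I n" unfolding I_def by blast
  qed
  moreover have "is_ideal (I n)" for n
    unfolding I_def by (rule is_ideal_principal)
  ultimately have "\<forall>n. is_ideal (I n) \<and> I (Suc n) \<subseteq> I n" by blast
  then obtain N where "\<forall>n\<ge>N. I n = I N"
    using assms(2) unfolding is_artinian_def by blast
  then have "I (Suc N) = I N" by (metis le_SucI order_refl)
  moreover have "a ^ N \<in> I N" unfolding I_def by (auto intro: exI[of _ 1])
  ultimately have "a ^ N \<in> I (Suc N)" by simp
  then obtain c where c: "a ^ N = c * a ^ Suc N" unfolding I_def by blast
  have "a ^ N * (1 - c * a) = a ^ N - c * a ^ Suc N" by (simp add: algebra_simps)
  also have "\<dots> = 0" by (subst c) simp
  finally have annihilated: "a ^ N * (1 - c * a) = 0" .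
  have "(1 - c * a) dvd 1"
    using unit_if_diff_in_max_ideal[OF local, of "1 - c * a" 1]
      is_ideal_mult[OF is_ideal_max_ideal[OF local] a, of "- c"] by simp
  then obtain b where "1 = (1 - c * a) * b" by (elim dvdE)
  then have "a ^ N = a ^ N * (1 - c * a) * b" by (simp add: mult.assoc)
  then have "a ^ N = 0" by (simp add: annihilated)
  then show ?thesis ..
qed

lemma ring_hom_fun_add: "ring_hom_fun f \<Longrightarrow> f (x + y) = f x + f y"
  unfolding ring_hom_fun_def by blast

lemma ring_hom_fun_mult: "ring_hom_fun f \<Longrightarrow> f (x * y) = f x * f y"
  unfolding ring_hom_fun_def by blast

lemma ring_hom_fun_1: "ring_hom_fun f \<Longrightarrow> f 1 = 1"
  unfolding ring_hom_fun_def by blast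

lemma ring_hom_fun_0: "ring_hom_fun f \<Longrightarrow> f 0 = 0"
  using ring_hom_fun_add[of f 0 0] by simp

lemma ring_hom_fun_diff: "ring_hom_fun f \<Longrightarrow> f (x - y) = f x - f y"
  using ring_hom_fun_add[of f "x - y" y] by (simp add: eq_diff_eq)

lemma ring_hom_fun_sum: "ring_hom_fun f \<Longrightarrow> f (sum g A) = (\<Sum>i\<in>A. f (g i))"
  by (induction A rule: infinite_finite_induct) (simp_all add: ring_hom_fun_0 ring_hom_fun_add)

lemma ring_hom_fun_unit: "ring_hom_fun f \<Longrightarrow> a dvd 1 \<Longrightarrow> f a dvd 1"
  by (metis dvdE dvdI ring_hom_fun_1 ring_hom_fun_mult)

lemma ring_hom_fun_field_unit: "ring_hom_fun (f :: 'k::field \<Rightarrow> 'a::comm_ring_1) \<Longrightarrow> c \<noteq> 0 \<Longrightarrow> f c dvd 1"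
  using ring_hom_fun_unit[of f c] by (simp add: dvd_field_iff)

lemma local_ring_hom_reflects_max_ideal:
  fixes f :: "'a::comm_ring_1 \<Rightarrow> 'b::comm_ring_1"
  assumes "ring_hom_fun f" "is_local_ring TYPE('a)" "is_local_ring TYPE('b)" "f a \<in> max_ideal"
  shows "a \<in> max_ideal"
  using assms ring_hom_fun_unit[of f a] by (auto simp: max_ideal_iff_not_unit)

lemma surj_local_ring_hom_reflects_units:
  fixes f :: "'a::comm_ring_1 \<Rightarrow> 'b::comm_ring_1"
  assumes hom: "ring_hom_fun f" and "surj f" and local: "is_local_ring TYPE('a)" "is_local_ring TYPE('b)"
    and "f z dvd 1"
  shows "z dvd 1"
proof -
  obtain b where "1 = f z * b" using \<open>f z dvd 1\<close> by (elim dvdE)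
  moreover obtain a where "f a = b" using \<open>surj f\<close> by (metis surjD)
  ultimately have "f (z * a - 1) \<in> max_ideal"
    using is_ideal_0[OF is_ideal_max_ideal[OF local(2)]]
    by (simp add: ring_hom_fun_diff[OF hom] ring_hom_fun_mult[OF hom] ring_hom_fun_1[OF hom])
  then have "z * a - 1 \<in> max_ideal" using local_ring_hom_reflects_max_ideal hom local by blast
  then have "z * a dvd 1" using unit_if_diff_in_max_ideal[OF local(1), of "z * a" 1] by simp
  then show ?thesis by (rule dvd_mult_left)
qed

lemma fps_map_nth [simp]: "fps_map h F $ n = h (F $ n)"
  by (simp add: fps_map_def)

lemma fps_map_add: "ring_hom_fun h \<Longrightarrow> fps_map h (F + G) = fps_map h F + fps_map h G"
  by (rule fps_ext) (simp add: ring_hom_fun_add)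

lemma fps_map_mult: "ring_hom_fun h \<Longrightarrow> fps_map h (F * G) = fps_map h F * fps_map h G"
  by (rule fps_ext) (simp add: fps_mult_nth ring_hom_fun_sum ring_hom_fun_mult)

lemma fps_map_1: "ring_hom_fun h \<Longrightarrow> fps_map h 1 = 1"
  by (rule fps_ext) (simp add: ring_hom_fun_0 ring_hom_fun_1)

lemma fps_map_surj: "surj h \<Longrightarrow> surj (fps_map h)"
  by (rule surjI[of _ "\<lambda>G. Abs_fps (\<lambda>n. inv h (G $ n))"]) (simp add: fps_eq_iff surj_f_inv_f)

lemma fps_dvd_one_iff: "(f :: 'a::comm_ring_1 fps) dvd 1 \<longleftrightarrow> f $ 0 dvd 1"
  using fps_is_left_unit_iff_zeroth_is_left_unit[of f] unfolding dvd_def by simp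

lemma LGm_pt_iff_unit: "LGm_pt u \<longleftrightarrow> u dvd 1"
  unfolding LGm_pt_def dvd_def by (metis eq_commute)

lemma reduces_to_fps_map:
  fixes \<pi> :: "'a::comm_ring_1 \<Rightarrow> 'b::comm_ring_1"
  assumes "k_alg_hom \<phi>A \<phi>B \<pi>" "is_local_ring TYPE('a)" "is_local_ring TYPE('b)"
    and "reduces_to \<phi>B (fps_map \<pi> F) g"
  shows "reduces_to \<phi>A F g"
  unfolding reduces_to_def
proof
  fix n
  have "ring_hom_fun \<pi>" and "\<pi> (\<phi>A (g $ n)) = \<phi>B (g $ n)"
    using assms(1) unfolding k_alg_hom_def by auto
  then have "\<pi> (F $ n - \<phi>A (g $ n)) = fps_map \<pi> F $ n - \<phi>B (g $ n)"
    by (simp add: ring_hom_fun_diff)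
  also have "\<dots> \<in> max_ideal" using assms(4) unfolding reduces_to_def by blast
  finally show "F $ n - \<phi>A (g $ n) \<in> max_ideal"
    using local_ring_hom_reflects_max_ideal \<open>ring_hom_fun \<pi>\<close> assms(2,3) by blast
qed

lemma reduces_to_nth_in_max_ideal:
  "ring_hom_fun \<phi> \<Longrightarrow> reduces_to \<phi> F g \<Longrightarrow> g $ n = 0 \<Longrightarrow> F $ n \<in> max_ideal"
  unfolding reduces_to_def by (metis diff_zero ring_hom_fun_0)

lemma reduces_to_nth_unit:
  fixes \<phi> :: "'k::field \<Rightarrow> 'a::comm_ring_1"
  assumes "ring_hom_fun \<phi>" "is_local_ring TYPE('a)" "reduces_to \<phi> F g" "g $ n \<noteq> 0"
  shows "F $ n dvd 1"
  using assms unit_if_diff_in_max_ideal ring_hom_fun_field_unit unfolding reduces_to_def by blast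

lemma fps_map_lift_inverse:
  fixes \<pi> :: "'a::comm_ring_1 \<Rightarrow> 'b::comm_ring_1"
  assumes hom: "ring_hom_fun \<pi>" and "surj \<pi>" and local: "is_local_ring TYPE('a)" "is_local_ring TYPE('b)"
    and w: "fps_map \<pi> w = wB" and wB: "uB * wB = 1"
  shows "\<exists>uA. w * uA = 1 \<and> fps_map \<pi> uA = uB"
proof -
  have "wB dvd 1" using dvd_triv_right[of wB uB] wB by simp
  then have "\<pi> (w $ 0) dvd 1" by (simp add: fps_dvd_one_iff flip: w)
  then have "w dvd 1"
    using surj_local_ring_hom_reflects_units[OF hom \<open>surj \<pi>\<close> local] by (simp add: fps_dvd_one_iff)
  then obtain uA where uA: "w * uA = 1" by (metis dvdE)
  have inv: "wB * fps_map \<pi> uA = 1"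
    using arg_cong[OF uA, of "fps_map \<pi>"] by (simp add: fps_map_mult[OF hom] fps_map_1[OF hom] w)
  have "fps_map \<pi> uA = (uB * wB) * fps_map \<pi> uA" by (simp add: wB)
  also have "\<dots> = uB" by (simp add: mult.assoc inv)
  finally show ?thesis using uA by blast
qed

section \<open>Division by a series with nilpotent low-order coefficients\<close>

text \<open>The \<open>K\<close>-th power of the ideal generated by \<open>a 0, \<dots>, a (v - 1)\<close>.\<close>
inductive_set gen_ideal_power :: "(nat \<Rightarrow> 'a::comm_ring_1) \<Rightarrow> nat \<Rightarrow> nat \<Rightarrow> 'a set"
  for a v K where
  zero: "0 \<in> gen_ideal_power a v K"
| monomial: "(\<forall>j<K. f j < v) \<Longrightarrow> c * (\<Prod>j<K. a (f j)) \<in> gen_ideal_power a v K"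
| add: "x \<in> gen_ideal_power a v K \<Longrightarrow> y \<in> gen_ideal_power a v K \<Longrightarrow> x + y \<in> gen_ideal_power a v K"

lemma gen_ideal_power_0: "x \<in> gen_ideal_power a v 0"
  using gen_ideal_power.monomial[of 0 _ v x a] by simp

lemma is_ideal_gen_ideal_power: "is_ideal (gen_ideal_power a v K)"
proof -
  have "b * x \<in> gen_ideal_power a v K" if "x \<in> gen_ideal_power a v K" for b x
    using that
  proof induction
    case (monomial f c)
    then show ?case using gen_ideal_power.monomial[of K f v "b * c" a] by (simp add: mult.assoc)
  qed (simp_all add: distrib_left gen_ideal_power.intros)
  then show ?thesis unfolding is_ideal_def by (blast intro: gen_ideal_power.intros)
qed

lemma gen_ideal_power_mult_generator:
  assumes "x \<in> gen_ideal_power a v K" "i < v"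
  shows "a i * x \<in> gen_ideal_power a v (Suc K)"
  using assms(1)
proof induction
  case (monomial f c)
  have "\<forall>j<Suc K. (f(K := i)) j < v" using monomial assms(2) by auto
  from gen_ideal_power.monomial[OF this, of c a] show ?case
    by (simp add: mult_ac)
qed (simp_all add: distrib_left gen_ideal_power.intros)

lemma gen_ideal_power_Suc:
  "(\<And>i. i < v \<Longrightarrow> y i \<in> gen_ideal_power a v K) \<Longrightarrow> (\<Sum>i<v. a i * y i) \<in> gen_ideal_power a v (Suc K)"
  by (rule is_ideal_sum[OF is_ideal_gen_ideal_power]) (simp add: gen_ideal_power_mult_generator)

text \<open>By pigeonhole, some generator \<open>a i\<close> occurs at least \<open>n i\<close> times in the product.\<close>
lemma prod_generators_eq_0:
  fixes a :: "nat \<Rightarrow> 'a::comm_ring_1"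
  assumes f: "\<forall>j<K. f j < v" and K: "(\<Sum>i<v. n i) < K" and nil: "\<forall>i<v. a i ^ n i = 0"
  shows "(\<Prod>j<K. a (f j)) = 0"
proof -
  define F where "F i = {j. j < K \<and> f j = i}" for i
  have "(\<Union>i<v. F i) = {..<K}" using f by (auto simp: F_def)
  then have card: "K \<le> (\<Sum>i<v. card (F i))"
    using card_UN_le[of "{..<v}" F] by simp
  have "\<exists>i<v. n i \<le> card (F i)"
  proof (rule ccontr)
    assume "\<not> ?thesis"
    then have "(\<Sum>i<v. card (F i)) \<le> (\<Sum>i<v. n i)" by (intro sum_mono) auto
    with card K show False by linarith
  qed
  then obtain i where i: "i < v" "n i \<le> card (F i)" by blast
  have "(\<Prod>j<K. a (f j)) = (\<Prod>j\<in>{..<K} - F i. a (f j)) * (\<Prod>j\<in>F i. a (f j))"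
    by (rule prod.subset_diff) (auto simp: F_def)
  also have "(\<Prod>j\<in>F i. a (f j)) = (\<Prod>j\<in>F i. a i)"
    by (rule prod.cong) (simp_all add: F_def)
  also have "\<dots> = a i ^ n i * a i ^ (card (F i) - n i)"
    using i(2) by (simp flip: power_add)
  finally show ?thesis using nil i(1) by simp
qed

lemma gen_ideal_power_eq_0:
  assumes "x \<in> gen_ideal_power a v K" "(\<Sum>i<v. n i) < K" "\<forall>i<v. a i ^ n i = 0"
  shows "x = 0"
  using assms(1) by induction (auto simp: prod_generators_eq_0[OF _ assms(2,3)])

lemma fps_mult_nth_in_ideal: "is_ideal J \<Longrightarrow> (\<And>m. F $ m \<in> J) \<Longrightarrow> (G * F) $ n \<in> J"
  unfolding fps_mult_nth by (auto intro: is_ideal_sum is_ideal_mult)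

lemma fps_shift_mult_nth_low:
  fixes P F :: "'a::comm_ring_1 fps"
  assumes "\<forall>i\<ge>v. P $ i = 0"
  shows "fps_shift v (P * F) $ m = (\<Sum>i<v. P $ i * F $ (m + v - i))"
proof -
  have "fps_shift v (P * F) $ m = (\<Sum>i=0..m+v. P $ i * F $ (m + v - i))"
    by (simp add: fps_mult_nth)
  also have "\<dots> = (\<Sum>i<v. P $ i * F $ (m + v - i))"
    using assms by (intro sum.mono_neutral_right) (auto simp: not_less)
  finally show ?thesis .
qed

lemma shift_mult_operator_nilpotent:
  fixes P E :: "'a::comm_ring_1 fps"
  assumes low: "\<forall>i\<ge>v. P $ i = 0" and nil: "\<forall>i<v. (P $ i) ^ n i = 0"
  shows "((\<lambda>F. E * fps_shift v (P * F)) ^^ Suc (\<Sum>i<v. n i)) F = 0"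
proof -
  define T where "T F = E * fps_shift v (P * F)" for F
  have "(T ^^ k) F $ m \<in> gen_ideal_power (fps_nth P) v k" for k m
  proof (induction k arbitrary: m)
    case 0
    show ?case by (rule gen_ideal_power_0)
  next
    case (Suc k)
    have "fps_shift v (P * (T ^^ k) F) $ j \<in> gen_ideal_power (fps_nth P) v (Suc k)" for j
      unfolding fps_shift_mult_nth_low[OF low] by (rule gen_ideal_power_Suc) (rule Suc.IH)
    then show ?case unfolding T_def funpow.simps o_def
      by (rule fps_mult_nth_in_ideal[OF is_ideal_gen_ideal_power])
  qed
  then have "(T ^^ Suc (\<Sum>i<v. n i)) F $ m = 0" for m
    by (rule gen_ideal_power_eq_0[OF _ lessI nil])
  moreover have "T = (\<lambda>F. E * fps_shift v (P * F))" by (rule ext) (rule T_def)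
  ultimately show ?thesis by (intro fps_ext) simp
qed

text \<open>A Weierstrass division: since \<open>\<eta>\<close> is \<open>X ^ v\<close> times a unit up to nilpotent lower coefficients,
  \<open>fps_shift v (\<delta> * \<eta>) = \<rho>\<close> can be solved as a terminating geometric series in a nilpotent operator.\<close>
lemma fps_shift_mult_solvable_in_ideal:
  fixes \<eta> \<rho> :: "'a::comm_ring_1 fps"
  assumes unit: "\<eta> $ v dvd 1" and nil: "\<forall>i<v. (\<eta> $ i) ^ n i = 0"
    and J: "is_ideal J" and \<rho>: "\<And>m. \<rho> $ m \<in> J"
  shows "\<exists>\<delta>. (\<forall>m. \<delta> $ m \<in> J) \<and> fps_shift v (\<delta> * \<eta>) = \<rho>"
proof -
  define P where "P = Abs_fps (\<lambda>i. if i < v then \<eta> $ i else 0)"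
  define E where "E = fps_shift v \<eta>"
  have \<eta>: "\<eta> = P + E * fps_X ^ v"
    by (rule fps_ext) (simp add: P_def E_def fps_X_power_mult_right_nth)
  have "E dvd 1" using unit by (simp add: E_def fps_dvd_one_iff)
  then obtain Ei where Ei: "E * Ei = 1" by (metis dvdE)
  define T where "T F = - Ei * fps_shift v (P * F)" for F
  have T_eq: "T = (\<lambda>F. - Ei * fps_shift v (P * F))" by (rule ext) (rule T_def)
  have T_sum: "T (\<Sum>k<K. G k) = (\<Sum>k<K. T (G k))" for K :: nat and G
    by (induction K) (simp_all add: T_def distrib_left fps_shift_add)
  have T_ideal: "(\<forall>m. F $ m \<in> J) \<Longrightarrow> T F $ m \<in> J" for F m
    unfolding T_def by (rule fps_mult_nth_in_ideal[OF J]) (simp add: fps_mult_nth_in_ideal[OF J])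
  have shift: "fps_shift v (F * \<eta>) = E * (F - T F)" for F
  proof -
    have "F * \<eta> = P * F + (E * F) * fps_X ^ v" by (simp add: \<eta> algebra_simps)
    then have "fps_shift v (F * \<eta>) = fps_shift v (P * F) + E * F" by (simp add: fps_shift_add)
    also have "\<dots> = E * F + (E * Ei) * fps_shift v (P * F)" by (simp add: Ei)
    also have "\<dots> = E * (F - T F)" by (simp add: T_def algebra_simps)
    finally show ?thesis .
  qed
  define K where "K = Suc (\<Sum>i<v. n i)"
  have TK: "(T ^^ K) F = 0" for F
    unfolding K_def T_eq
    by (rule shift_mult_operator_nilpotent) (use nil in \<open>simp_all add: P_def\<close>)
  define c where "c = Ei * \<rho>"
  define \<delta> where "\<delta> = (\<Sum>k<K. (T ^^ k) c)"
  have "\<delta> - T \<delta> = (\<Sum>k<K. (T ^^ k) c - (T ^^ Suc k) c)"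
    unfolding \<delta>_def T_sum by (simp add: sum_subtractf)
  also have "\<dots> = c - (T ^^ K) c" by (subst sum_lessThan_telescope') simp
  finally have "fps_shift v (\<delta> * \<eta>) = \<rho>"
    by (simp add: shift TK c_def mult.assoc[symmetric] Ei)
  moreover have "(T ^^ k) c $ m \<in> J" for k m
    by (induction k arbitrary: m) (simp_all add: c_def T_ideal fps_mult_nth_in_ideal[OF J \<rho>])
  then have "\<delta> $ m \<in> J" for m
    unfolding \<delta>_def fps_sum_nth by (rule is_ideal_sum[OF J])
  ultimately show ?thesis by blast
qed

section \<open>The multiplication map beta\<close>

lemma Y_pt_subdegree_le:
  fixes y :: "'a::comm_ring_1 fps"
  assumes "Y_pt d y"
  shows "y \<noteq> 0" and "subdegree y \<le> d"
proof -
  obtain c where c: "(\<Sum>i\<le>d. c i * y $ i) = 1" using assms unfolding Y_pt_def by blast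
  then show "y \<noteq> 0" by auto
  show "subdegree y \<le> d"
  proof (rule ccontr)
    assume "\<not> subdegree y \<le> d"
    then have "(\<Sum>i\<le>d. c i * y $ i) = 0" by (simp add: nth_less_subdegree_zero)
    with c show False by simp
  qed
qed

lemma beta_ne_0_subdegree_le:
  fixes x :: "'k::field fps \<times> 'k fps"
  assumes "X_pt d x"
  shows "beta x \<noteq> 0" and "subdegree (beta x) \<le> d"
proof -
  obtain q u where x: "x = (q, u)" by fastforce
  have "q $ d = 1" "u dvd 1" using assms by (simp_all add: x X_pt_def Qd_pt_def LGm_pt_iff_unit)
  then have "q \<noteq> 0" "u \<noteq> 0" "subdegree u = 0" "subdegree q \<le> d"
    by (auto intro: subdegree_leI)
  then show "beta x \<noteq> 0" and "subdegree (beta x) \<le> d" by (simp_all add: x beta_def)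
qed

lemma beta_surj_on_field_points:
  fixes y :: "'k::field fps"
  assumes "Y_pt d y"
  shows "\<exists>x. X_pt d x \<and> beta x = y"
proof -
  define v where "v = subdegree y"
  have y: "y \<noteq> 0" "v \<le> d" using Y_pt_subdegree_le[OF assms] by (simp_all add: v_def)
  define q :: "'k fps" where "q = Abs_fps (\<lambda>i. if i = v \<or> i = d then 1 else 0)"
  have Q: "Qd_pt d q" using y by (simp add: q_def Qd_pt_def)
  have qv: "q $ v \<noteq> 0" by (simp add: q_def)
  then have q0: "q \<noteq> 0" by auto
  have "subdegree q = v"
    by (intro antisym subdegree_leI[OF qv] subdegree_geI[OF q0]) (use y in \<open>simp add: q_def\<close>)
  note q = q0 this
  then obtain u where yqu: "y = q * u"
    using subdegree_le_imp_dvd_left_divring[of q y] by (metis v_def order_refl)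
  have u0: "u \<noteq> 0" using y(1) yqu by auto
  have "subdegree y = subdegree q + subdegree u" using yqu q0 u0 by simp
  then have "subdegree u = 0" using q by (simp add: v_def)
  then have "LGm_pt u" using u0 by (simp add: LGm_pt_iff_unit subdegree_eq_0_iff)
  with Q yqu show ?thesis by (intro exI[of _ "(q, u)"]) (simp add: X_pt_def beta_def mult.commute)
qed

lemma reduces_to_subdegree_coeffs:
  fixes \<phi> :: "'k::field \<Rightarrow> 'a::comm_ring_1"
  assumes \<phi>: "art_local_k_alg \<phi>" and red: "reduces_to \<phi> \<eta> y" and "y \<noteq> 0"
  shows "\<exists>n. \<forall>i<subdegree y. (\<eta> $ i) ^ n i = 0" and "\<eta> $ subdegree y dvd 1"
proof -
  have hom: "ring_hom_fun \<phi>" and local: "is_local_ring TYPE('a)" and "is_artinian TYPE('a)"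
    using \<phi> by (simp_all add: art_local_k_alg_def)
  have "\<eta> $ i \<in> max_ideal" if "i < subdegree y" for i
    by (rule reduces_to_nth_in_max_ideal[OF hom red nth_less_subdegree_zero[OF that]])
  then have "\<forall>i. \<exists>m. i < subdegree y \<longrightarrow> (\<eta> $ i) ^ m = 0"
    by (blast dest: max_ideal_nilpotent[OF local \<open>is_artinian TYPE('a)\<close>])
  from choice[OF this] show "\<exists>n. \<forall>i<subdegree y. (\<eta> $ i) ^ n i = 0" by blast
  show "\<eta> $ subdegree y dvd 1"
    using reduces_to_nth_unit[OF hom local red] \<open>y \<noteq> 0\<close> by simp
qed

lemma exists_lift_with_monic_multiple:
  fixes \<eta> :: "'a::comm_ring_1 fps" and \<pi> :: "'a \<Rightarrow> 'b::comm_ring_1"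
  assumes hom: "ring_hom_fun \<pi>" and "surj \<pi>"
    and unit: "\<eta> $ v dvd 1" and nil: "\<forall>i<v. (\<eta> $ i) ^ n i = 0" and "v \<le> d"
    and Q: "Qd_pt d (wB * fps_map \<pi> \<eta>)"
  shows "\<exists>w. fps_map \<pi> w = wB \<and> Qd_pt d (w * \<eta>)"
proof -
  obtain w0 where w0: "fps_map \<pi> w0 = wB" using fps_map_surj[OF \<open>surj \<pi>\<close>] by (metis surjD)
  define J where "J = {a. \<pi> a = 0}"
  have J: "is_ideal J"
    unfolding is_ideal_def J_def by (simp add: ring_hom_fun_0 ring_hom_fun_add ring_hom_fun_mult hom)
  text \<open>The corrections to the coefficients of \<open>w0 * \<eta>\<close> in degrees \<open>\<ge> d\<close> lie in \<open>ker \<pi>\<close>,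
    because the image \<open>wB * \<pi> \<eta>\<close> is already monic of degree \<open>d\<close>.\<close>
  define \<rho> where "\<rho> = Abs_fps (\<lambda>m. if d \<le> m + v then of_bool (m + v = d) - (w0 * \<eta>) $ (m + v) else 0)"
  have "fps_map \<pi> (w0 * \<eta>) = wB * fps_map \<pi> \<eta>" by (simp add: fps_map_mult[OF hom] w0)
  then have "\<pi> ((w0 * \<eta>) $ i) = (wB * fps_map \<pi> \<eta>) $ i" for i by (metis fps_map_nth)
  then have "\<rho> $ m \<in> J" for m
    using Q by (auto simp: \<rho>_def J_def Qd_pt_def ring_hom_fun_diff ring_hom_fun_0 ring_hom_fun_1 hom)
  then obtain \<delta> where \<delta>J: "\<forall>m. \<delta> $ m \<in> J" and \<delta>: "fps_shift v (\<delta> * \<eta>) = \<rho>"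
    using fps_shift_mult_solvable_in_ideal[OF unit nil J] by blast
  define w where "w = w0 + \<delta>"
  have "fps_map \<pi> \<delta> = 0" using \<delta>J by (simp add: J_def fps_eq_iff)
  then have "fps_map \<pi> w = wB" by (simp add: w_def fps_map_add[OF hom] w0)
  moreover have "(w * \<eta>) $ m = of_bool (m = d)" if "d \<le> m" for m
  proof -
    have "(\<delta> * \<eta>) $ m = \<rho> $ (m - v)"
      using that \<open>v \<le> d\<close> by (simp flip: \<delta>)
    then show ?thesis using that \<open>v \<le> d\<close> by (simp add: w_def distrib_right \<rho>_def)
  qed
  then have "Qd_pt d (w * \<eta>)" by (simp add: Qd_pt_def)
  ultimately show ?thesis by blast
qed

lemma beta_lifts_art_local:
  fixes x :: "'k::field fps \<times> 'k fps" and \<phi>A :: "'k \<Rightarrow> 'a::comm_ring_1"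
    and \<phi>B :: "'k \<Rightarrow> 'b::comm_ring_1" and \<pi> :: "'a \<Rightarrow> 'b"
  assumes X: "X_pt d x" and A: "art_local_k_alg \<phi>A" and B: "art_local_k_alg \<phi>B"
    and \<pi>: "k_alg_hom \<phi>A \<phi>B \<pi>" and "surj \<pi>"
  shows "beta_lifts d x \<phi>A \<phi>B \<pi>"
  unfolding beta_lifts_def
proof (intro allI impI)
  fix \<xi>B :: "'b fps \<times> 'b fps" and \<eta> :: "'a fps"
  assume lift: "hatX_pt \<phi>B d x \<xi>B \<and> hatY_pt \<phi>A d (beta x) \<eta> \<and> beta \<xi>B = fps_map \<pi> \<eta>"
  obtain qB uB where \<xi>B: "\<xi>B = (qB, uB)" by fastforce
  have local: "is_local_ring TYPE('a)" "is_local_ring TYPE('b)" and hom: "ring_hom_fun \<pi>"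
    using A B \<pi> by (simp_all add: art_local_k_alg_def k_alg_hom_def)
  have QB: "Qd_pt d qB" and "uB dvd 1" and \<eta>B: "uB * qB = fps_map \<pi> \<eta>"
    using lift by (simp_all add: \<xi>B hatX_pt_def X_pt_def LGm_pt_iff_unit beta_def)
  define v where "v = subdegree (beta x)"
  obtain n where nil: "\<forall>i<v. (\<eta> $ i) ^ n i = 0" and unit: "\<eta> $ v dvd 1"
    using reduces_to_subdegree_coeffs[OF A _ beta_ne_0_subdegree_le(1)[OF X]] lift
    unfolding v_def hatY_pt_def by blast
  obtain wB where wB: "uB * wB = 1" using \<open>uB dvd 1\<close> by (metis dvdE)
  have "wB * fps_map \<pi> \<eta> = (uB * wB) * qB" by (simp add: \<eta>B[symmetric] ac_simps)
  then have qB: "wB * fps_map \<pi> \<eta> = qB" by (simp add: wB)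
  have "v \<le> d" using beta_ne_0_subdegree_le(2)[OF X] by (simp add: v_def)
  moreover have "Qd_pt d (wB * fps_map \<pi> \<eta>)" using QB qB by simp
  ultimately obtain w where w: "fps_map \<pi> w = wB" and Q: "Qd_pt d (w * \<eta>)"
    using exists_lift_with_monic_multiple[OF hom \<open>surj \<pi>\<close> unit nil] by blast
  obtain uA where uA: "w * uA = 1" and uB: "fps_map \<pi> uA = uB"
    using fps_map_lift_inverse[OF hom \<open>surj \<pi>\<close> local w wB] by blast
  have qA: "fps_map \<pi> (w * \<eta>) = qB" by (simp add: fps_map_mult[OF hom] w qB)
  have "LGm_pt uA" using uA unfolding LGm_pt_def by (metis mult.commute)
  have "reduces_to \<phi>B qB (fst x)" "reduces_to \<phi>B uB (snd x)"
    using lift by (simp_all add: \<xi>B hatX_pt_def)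
  then have "reduces_to \<phi>A (w * \<eta>) (fst x)" "reduces_to \<phi>A uA (snd x)"
    by (simp_all add: reduces_to_fps_map[OF \<pi> local] qA uB)
  with Q \<open>LGm_pt uA\<close> have hatX: "hatX_pt \<phi>A d x (w * \<eta>, uA)"
    by (simp add: hatX_pt_def X_pt_def)
  have "beta (w * \<eta>, uA) = (w * uA) * \<eta>" by (simp add: beta_def ac_simps)
  then have "beta (w * \<eta>, uA) = \<eta>" by (simp add: uA)
  with hatX show "\<exists>\<xi>A. hatX_pt \<phi>A d x \<xi>A \<and> fps_map \<pi> (fst \<xi>A) = fst \<xi>B \<and> fps_map \<pi> (snd \<xi>A) = snd \<xi>B
               \<and> beta \<xi>A = \<eta>"
    using qA uB by (intro exI[of _ "(w * \<eta>, uA)"]) (simp add: \<xi>B)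
qed

theorem proposition3p8:
  fixes d :: nat
  shows "(\<forall>y :: 'k::field fps. Y_pt d y \<longrightarrow> (\<exists>x. X_pt d x \<and> beta x = y)) \<and>
         (\<forall>(x :: 'k fps \<times> 'k fps) (\<phi>A :: 'k \<Rightarrow> 'a::comm_ring_1) (\<phi>B :: 'k \<Rightarrow> 'b::comm_ring_1) \<pi>.
            X_pt d x \<and> art_local_k_alg \<phi>A \<and> art_local_k_alg \<phi>B \<and> k_alg_hom \<phi>A \<phi>B \<pi> \<and> surj \<pi>
            \<longrightarrow> beta_lifts d x \<phi>A \<phi>B \<pi>)"
  using beta_surj_on_field_points beta_lifts_art_local by blast

end
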